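(* For every $j \geq 1$, the partial function $\xi_j$ preserves both $\rho_1$ and $\rho_C$, i.e. $\xi_j \in \mathrm{pPol}\,\rho_1$ and $\xi_j\in\mathrm{pPol}\,\rho_C$.
   Context: Partial functions are on $\{0,1\}$: an $n$-ary partial function is a map $f:\operatorname{dom} f\to\{0,1\}$ with $\operatorname{dom} f\subseteq\{0,1\}^n$. For a relation $\rho\subseteq\{0,1\}^h$, $f$ preserves $\rho$ ($f\in\mathrm{pPol}\,\rho$) if for every $h\times n$ matrix whose rows lie in $\operatorname{dom} f$ and whose columns lie in $\rho$, the column obtained by applying $f$ to each row lies in $\rho$. Let $n(k,p)=(2k-1)p+1$ for $k\ge2$, $p\ge1$; $\tau^k_p$ is the $n(k,p)$-ary partial function with domain $\{(1,\dots,1)\}\cup\{\mathbf{x}\in\{0,1\}^{n(k,p)}:\mathbf{x}\text{ has at most }p\text{ entries equal to }1\}$, taking value $1$ at $(1,\dots,1)$ and $0$ elsewhere on its domain. Let $p_1=1$, $p_j=n(j,p_{j-1})$ for $j\ge2$, and $\xi_j=\tau^{j+1}_{p_j}$. $\rho_C\subseteq\{0,1\}^4$ consists of the tuples $(0,0,0,0),(0,0,1,1),(0,1,0,1),(1,1,1,1)$; $\rho_1\subseteq\{0,1\}^4$ consists of $(0,0,0,0),(0,0,1,1),(0,1,0,1),(1,0,1,0),(1,1,0,0),(1,1,1,1)$. *)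

theory Defs
  imports Main
begin

text \<open>Boolean tuples are lists of bool (False = 0, True = 1).
An n-ary partial function is given by its arity, its domain (a set of
length-n tuples) and a total function that is only consulted on the domain.\<close>

record pfun =
  arity :: nat
  pdom :: "bool list set"
  pval :: "bool list \<Rightarrow> bool"

definition is_pfun :: "pfun \<Rightarrow> bool" where
  "is_pfun f \<longleftrightarrow> (\<forall>x\<in>pdom f. length x = arity f)"

definition is_rel :: "nat \<Rightarrow> bool list set \<Rightarrow> bool" where
  "is_rel h \<rho> \<longleftrightarrow> (\<forall>t\<in>\<rho>. length t = h)"

definition preserves :: "pfun \<Rightarrow> nat \<Rightarrow> bool list set \<Rightarrow> bool" where
  "preserves f h \<rho> \<longleftrightarrow>
     (\<forall>M :: nat \<Rightarrow> nat \<Rightarrow> bool.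
        (\<forall>i<h. map (M i) [0..<arity f] \<in> pdom f) \<longrightarrow>
        (\<forall>c<arity f. map (\<lambda>i. M i c) [0..<h] \<in> \<rho>) \<longrightarrow>
        map (\<lambda>i. pval f (map (M i) [0..<arity f])) [0..<h] \<in> \<rho>)"

definition nkp :: "nat \<Rightarrow> nat \<Rightarrow> nat" where
  "nkp k p = (2 * k - 1) * p + 1"

definition tau :: "nat \<Rightarrow> nat \<Rightarrow> pfun" where
  "tau k p = \<lparr> arity = nkp k p,
     pdom = {replicate (nkp k p) True} \<union>
            {x. length x = nkp k p \<and> length (filter id x) \<le> p},
     pval = (\<lambda>x. x = replicate (nkp k p) True) \<rparr>"

fun pseq :: "nat \<Rightarrow> nat" where
  "pseq 0 = 1"
| "pseq (Suc 0) = 1"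
| "pseq (Suc (Suc j)) = nkp (Suc (Suc j)) (pseq (Suc j))"

definition xi :: "nat \<Rightarrow> pfun" where
  "xi j = tau (j + 1) (pseq j)"

definition rho_C :: "bool list set" where
  "rho_C = {[False,False,False,False], [False,False,True,True],
            [False,True,False,True], [True,True,True,True]}"

definition rho_1 :: "bool list set" where
  "rho_1 = {[False,False,False,False], [False,False,True,True],
            [False,True,False,True], [True,False,True,False],
            [True,True,False,False], [True,True,True,True]}"

end

theory Submission
  imports Defs
begin

text \<open>A row of a matrix in the domain of \<open>\<tau>\<^sup>k\<^sub>p\<close> is either constantly 1 (value 1) or has at
most \<open>p\<close> ones (value 0), so the output column is the componentwise meet of the
columns. Since \<open>n(k,p) > 2p\<close> for \<open>k \<ge> 2\<close>, any two rows of value 0 vanish together in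
some column. Hence every two coordinates of the output are realised by an input column
lying above it, and both \<open>\<rho>\<^sub>1\<close> and \<open>\<rho>\<^sub>C\<close> contain every tuple with this property.\<close>

lemma tau_row_in_pdom:
  "map f [0..<nkp k p] \<in> pdom (tau k p) \<longleftrightarrow>
     (\<forall>c<nkp k p. f c) \<or> card {c. c < nkp k p \<and> f c} \<le> p"
proof -
  have "length (filter id (map f [0..<nkp k p])) = card {c. c < nkp k p \<and> f c}"
    by (simp add: length_filter_conv_card cong: conj_cong)
  then show ?thesis
    unfolding tau_def by (auto simp: list_eq_iff_nth_eq simp del: filter_map)
qed

lemma tau_row_pval: "pval (tau k p) (map f [0..<nkp k p]) \<longleftrightarrow> (\<forall>c<nkp k p. f c)"
  unfolding tau_def by (auto simp: list_eq_iff_nth_eq)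

lemma two_le_nkp: "k \<ge> 2 \<Longrightarrow> 2 * p < nkp k p"
proof -
  assume "k \<ge> 2"
  then have "3 * p \<le> (2 * k - 1) * p" by (intro mult_right_mono) auto
  then show ?thesis unfolding nkp_def by linarith
qed

lemma ex_common_zero:
  fixes n p :: nat
  assumes "2 * p < n" "card {c. c < n \<and> f c} \<le> p" "card {c. c < n \<and> g c} \<le> p"
  shows "\<exists>c<n. \<not> f c \<and> \<not> g c"
proof (rule ccontr)
  assume "\<not> ?thesis"
  then have "{..<n} \<subseteq> {c. c < n \<and> f c} \<union> {c. c < n \<and> g c}" by auto
  then have "card {..<n} \<le> card ({c. c < n \<and> f c} \<union> {c. c < n \<and> g c})"
    by (intro card_mono) auto
  also have "\<dots> \<le> card {c. c < n \<and> f c} + card {c. c < n \<and> g c}" by (rule card_Un_le)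
  finally show False using assms by simp
qed

definition closed_under_pairwise_meets :: "nat \<Rightarrow> bool list set \<Rightarrow> bool" where
  "closed_under_pairwise_meets h \<rho> \<longleftrightarrow>
     (\<forall>t. length t = h \<longrightarrow>
        (\<forall>i<h. \<forall>j<h. \<exists>s\<in>\<rho>. (\<forall>l<h. t ! l \<longrightarrow> s ! l) \<and> s ! i = t ! i \<and> s ! j = t ! j) \<longrightarrow>
        t \<in> \<rho>)"

lemma tau_preserves_if_closed_under_pairwise_meets:
  assumes "2 * p < nkp k p" and "closed_under_pairwise_meets h \<rho>"
  shows "preserves (tau k p) h \<rho>"
  unfolding preserves_def
proof (intro allI impI)
  fix M :: "nat \<Rightarrow> nat \<Rightarrow> bool"
  define n where "n = nkp k p"
  have arity: "arity (tau k p) = n" by (simp add: tau_def n_def)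
  assume "\<forall>i<h. map (M i) [0..<arity (tau k p)] \<in> pdom (tau k p)"
    and cols: "\<forall>c<arity (tau k p). map (\<lambda>i. M i c) [0..<h] \<in> \<rho>"
  define t where "t = map (\<lambda>i. \<forall>c<n. M i c) [0..<h]"
  have sparse: "card {c. c < n \<and> M i c} \<le> p" if "i < h" "\<not> t ! i" for i
    using \<open>\<forall>i<h. _\<close> that tau_row_in_pdom[of "M i" k p] by (auto simp: arity n_def t_def)
  have common_zero: "\<exists>c<n. \<not> M i c \<and> \<not> M j c"
    if "i < h" "j < h" "\<not> t ! i" "\<not> t ! j" for i j
    using ex_common_zero[OF _ sparse sparse] assms(1) that by (simp add: n_def)
  have "\<exists>s\<in>\<rho>. (\<forall>l<h. t ! l \<longrightarrow> s ! l) \<and> s ! i = t ! i \<and> s ! j = t ! j"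
    if "i < h" "j < h" for i j
  proof -
    have "\<exists>c<n. (\<not> t ! i \<longrightarrow> \<not> M i c) \<and> (\<not> t ! j \<longrightarrow> \<not> M j c)"
      using common_zero[of i i] common_zero[of j j] common_zero[of i j] that assms(1)
      by (cases "t ! i"; cases "t ! j") (auto simp: n_def)
    then obtain c where "c < n" "\<not> t ! i \<longrightarrow> \<not> M i c" "\<not> t ! j \<longrightarrow> \<not> M j c" by blast
    moreover have "t ! l \<Longrightarrow> M l c" if "l < h" for l
      using that \<open>c < n\<close> by (simp add: t_def)
    ultimately show ?thesis
      using cols that by (intro bexI[of _ "map (\<lambda>i. M i c) [0..<h]"]) (auto simp: arity)
  qed
  then have "t \<in> \<rho>"
    using assms(2) unfolding closed_under_pairwise_meets_def by (simp add: t_def)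
  then show "map (\<lambda>i. pval (tau k p) (map (M i) [0..<arity (tau k p)])) [0..<h] \<in> \<rho>"
    by (simp add: arity n_def t_def tau_row_pval)
qed

lemma all_less_four: "(\<forall>i<4::nat. P i) \<longleftrightarrow> P 0 \<and> P 1 \<and> P 2 \<and> P 3"
  by (auto simp: less_Suc_eq numeral_eq_Suc)

lemma length_four_cases:
  assumes "length t = 4"
  obtains a b c d where "t = [a, b, c, d]"
  using assms by (auto simp: numeral_eq_Suc length_Suc_conv)

lemma closed_under_pairwise_meets_rho_1: "closed_under_pairwise_meets 4 rho_1"
  unfolding closed_under_pairwise_meets_def
proof (intro allI impI)
  fix t :: "bool list"
  assume "length t = 4"
    and realised: "\<forall>i<4. \<forall>j<4. \<exists>s\<in>rho_1. (\<forall>l<4. t ! l \<longrightarrow> s ! l) \<and> s ! i = t ! i \<and> s ! j = t ! j"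
  obtain a b c d where t: "t = [a, b, c, d]"
    using \<open>length t = 4\<close> by (rule length_four_cases)
  show "t \<in> rho_1"
    using realised unfolding t all_less_four rho_1_def
    by (cases a; cases b; cases c; cases d) simp_all
qed

lemma closed_under_pairwise_meets_rho_C: "closed_under_pairwise_meets 4 rho_C"
  unfolding closed_under_pairwise_meets_def
proof (intro allI impI)
  fix t :: "bool list"
  assume "length t = 4"
    and realised: "\<forall>i<4. \<forall>j<4. \<exists>s\<in>rho_C. (\<forall>l<4. t ! l \<longrightarrow> s ! l) \<and> s ! i = t ! i \<and> s ! j = t ! j"
  obtain a b c d where t: "t = [a, b, c, d]"
    using \<open>length t = 4\<close> by (rule length_four_cases)
  show "t \<in> rho_C"
    using realised unfolding t all_less_four rho_C_def
    by (cases a; cases b; cases c; cases d) simp_all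
qed

theorem mainTheorem15:
  fixes j :: nat
  assumes "j \<ge> 1"
  shows "preserves (xi j) 4 rho_1 \<and> preserves (xi j) 4 rho_C"
proof -
  have "2 * pseq j < nkp (j + 1) (pseq j)"
    using assms by (intro two_le_nkp) simp
  then show ?thesis
    unfolding xi_def
    using tau_preserves_if_closed_under_pairwise_meets
      closed_under_pairwise_meets_rho_1 closed_under_pairwise_meets_rho_C
    by blast
qed

end
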